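(* Let $\mathbf{m}$ be diagonal with strictly positive diagonal, fix a realization of $\mathbf{R}$, and let $\hat b=(\mathbf{x}'\mathbf{m}\mathbf{R}\mathbf{x})^{+}\mathbf{x}'\mathbf{m}\mathbf{R}y$. Define the missing imputed estimator $\hat\mu^{MI}=\frac1n\mathbf{1}'\big(I_{kn}-(\mathbf{R}-I_{kn})\mathbf{x}(\mathbf{x}'\mathbf{m}\mathbf{R}\mathbf{x})^{+}\mathbf{x}'\mathbf{m}\big)\mathbf{R}y$ and the generalized regression estimator $\hat\mu^{GR}=\frac1n\mathbf{1}'\pi^{-1}\mathbf{R}y-\big(\frac1n\mathbf{1}'\pi^{-1}\mathbf{R}-\frac1n\mathbf{1}'\big)\mathbf{x}\hat b$. If there exists $\mathbf{t}\in\mathbb{R}^{(k+p)\times k}$ with $\mathbf{R}\mathbf{m}\mathbf{x}\mathbf{t}=\mathbf{R}(I_{kn}-\pi^{-1})\mathbf{1}$, then $\hat\mu^{MI}=\hat\mu^{GR}$.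
   Context: $k$ arms, $n$ units, $p$ covariates. $y\in\mathbb{R}^{kn}$ stacks potential outcomes of the $k$ arms. $\mathbf{R}$ is the $kn\times kn$ diagonal matrix of assignment indicators (ordered arm by arm), $\pi=\mathrm{E}[\mathbf{R}]$ with entries in $(0,1)$. $\mathbf{1}=I_k\otimes1_n$; $\mathbf{x}=[\mathbf{1}\mid1_k\otimes X]$ for a covariate matrix $X\in\mathbb{R}^{n\times p}$; $A^+$ is the Moore–Penrose inverse. *)

theory Defs
  imports "Jordan_Normal_Form.Matrix"
begin

definition mp_inverse :: "real mat \<Rightarrow> real mat" where
  "mp_inverse A = (THE B. B \<in> carrier_mat (dim_col A) (dim_row A) \<and>
      A * B * A = A \<and> B * A * B = B \<and> (A * B)\<^sup>T = A * B \<and> (B * A)\<^sup>T = B * A)"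

text \<open>Index of unit u (u < n) in arm a (a < k) in the stacked kn-vector: a * n + u
  (ordering arm by arm).  The matrix 1 = I_k \<otimes> 1_n.\<close>
definition ones_blk :: "nat \<Rightarrow> nat \<Rightarrow> real mat" where
  "ones_blk k n = mat (k * n) k (\<lambda>(i, b). if i div n = b then 1 else 0)"

text \<open>Design matrix x = [1 | 1_k \<otimes> X] for X an n x p covariate matrix.\<close>
definition design_mat :: "nat \<Rightarrow> nat \<Rightarrow> real mat \<Rightarrow> real mat" where
  "design_mat k n X = mat (k * n) (k + dim_col X)
     (\<lambda>(i, c). if c < k then (if i div n = c then 1 else 0) else X $$ (i mod n, c - k))"

definition b_hat :: "real mat \<Rightarrow> real mat \<Rightarrow> real mat \<Rightarrow> real vec \<Rightarrow> real vec" where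
  "b_hat x m R y = (mp_inverse (x\<^sup>T * m * R * x) * x\<^sup>T * m * R) *\<^sub>v y"

definition mu_MI :: "nat \<Rightarrow> nat \<Rightarrow> real mat \<Rightarrow> real mat \<Rightarrow> real mat \<Rightarrow> real mat \<Rightarrow> real vec \<Rightarrow> real vec" where
  "mu_MI n N ones x m R y =
     (1 / real n) \<cdot>\<^sub>v ((ones\<^sup>T * (1\<^sub>m N - (R - 1\<^sub>m N) * x * mp_inverse (x\<^sup>T * m * R * x) * x\<^sup>T * m) * R) *\<^sub>v y)"

text \<open>Generalized regression estimator; pinv is the matrix \<pi>^{-1}.\<close>
definition mu_GR :: "nat \<Rightarrow> real mat \<Rightarrow> real mat \<Rightarrow> real mat \<Rightarrow> real mat \<Rightarrow> real mat \<Rightarrow> real vec \<Rightarrow> real vec" where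
  "mu_GR n ones x m R pinv y =
     (1 / real n) \<cdot>\<^sub>v ((ones\<^sup>T * pinv * R) *\<^sub>v y)
     - (((1 / real n) \<cdot>\<^sub>m (ones\<^sup>T * pinv * R) - (1 / real n) \<cdot>\<^sub>m ones\<^sup>T) * x) *\<^sub>v b_hat x m R y"

end

theory Submission
  imports Defs "Jordan_Normal_Form.Determinant"
begin

(* The two estimators differ by (1/n) U (I - H) y, where U = 1'(I - pi^-1) R and
   H = x (x'mRx)^+ x'mR is the weighted hat matrix.  Transposing the calibration condition gives
   U = t' x'mR, so the rows of U lie in the row space of x'mR, which H fixes: with S = (mR)^(1/2)
   and A = S x we have x'mR = A'S and x'mRx = A'A =: G, and G G^+ A' = A' because
   (I - G G^+) A' has Gram matrix (I - G G^+) G (I - G G^+) = 0.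
   The Moore-Penrose inverse of the symmetric matrix G is constructed from a polynomial relation
   c G + G^2 h(G) = 0 with c ~= 0. *)

lemma transpose_smult_mat: "(c \<cdot>\<^sub>m A)\<^sup>T = c \<cdot>\<^sub>m A\<^sup>T"
  by (rule eq_matI) auto

lemma transpose_mat_diag [simp]: "(mat_diag n f)\<^sup>T = mat_diag n f"
  by (rule eq_matI) (auto simp: mat_diag_def)

lemma mult_transpose_eq_0_imp_eq_0:
  fixes Z :: "real mat"
  assumes Z: "Z \<in> carrier_mat r c" and ZZ: "Z * Z\<^sup>T = 0\<^sub>m r r"
  shows "Z = 0\<^sub>m r c"
proof (rule eq_matI)
  fix i j assume i: "i < dim_row (0\<^sub>m r c)" and j: "j < dim_col (0\<^sub>m r c)"
  have "(\<Sum>l<c. Z $$ (i, l) * Z $$ (i, l)) = (Z * Z\<^sup>T) $$ (i, i)"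
    using Z i by (simp add: scalar_prod_def lessThan_atLeast0)
  also have "\<dots> = 0" using ZZ i by simp
  finally have "\<forall>l\<in>{..<c}. Z $$ (i, l) * Z $$ (i, l) = 0"
    by (subst sum_nonneg_eq_0_iff [symmetric]) auto
  then show "Z $$ (i, j) = 0\<^sub>m r c $$ (i, j)" using i j by simp
qed (use Z in auto)

lemma transpose_mult_eq_0_imp_eq_0:
  fixes Z :: "real mat"
  assumes Z: "Z \<in> carrier_mat r c" and "Z\<^sup>T * Z = 0\<^sub>m c c"
  shows "Z = 0\<^sub>m r c"
  using mult_transpose_eq_0_imp_eq_0 [of "Z\<^sup>T" c r] assms
  by (metis carrier_matD transpose_carrier_mat transpose_transpose zero_transpose_mat)

lemma sym_mat_mult_mult_eq_0:
  fixes B N :: "real mat"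
  assumes B: "B \<in> carrier_mat q q" and N: "N \<in> carrier_mat q c" and sym: "B\<^sup>T = B"
    and BBN: "B * (B * N) = 0\<^sub>m q c"
  shows "B * N = 0\<^sub>m q c"
proof -
  have "(B * N)\<^sup>T * (B * N) = N\<^sup>T * (B * (B * N))"
    using B N sym by (simp add: transpose_mult [of B q q N c] assoc_mult_mat [of _ c q _ q _ c])
  also have "\<dots> = 0\<^sub>m c c" using BBN N by simp
  finally show ?thesis using transpose_mult_eq_0_imp_eq_0 [of "B * N" q c] B N by simp
qed

lemma sym_mat_pow_mult_eq_0:
  fixes B N :: "real mat"
  assumes B: "B \<in> carrier_mat q q" and sym: "B\<^sup>T = B"
  shows "N \<in> carrier_mat q c \<Longrightarrow> B ^\<^sub>m Suc j * N = 0\<^sub>m q c \<Longrightarrow> B * N = 0\<^sub>m q c"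
proof (induction j arbitrary: N)
  case 0
  then show ?case using B by simp
next
  case (Suc j)
  have "B ^\<^sub>m Suc j * (B * N) = B ^\<^sub>m Suc (Suc j) * N"
    using B Suc.prems(1) by (simp add: assoc_mult_mat [of _ q q _ q _ c] assoc_mult_mat [of _ q q _ q _ q])
  then have "B * (B * N) = 0\<^sub>m q c" using Suc B by simp
  then show ?case using sym_mat_mult_mult_eq_0 [OF B Suc.prems(1) sym] by simp
qed

fun mat_horner :: "nat \<Rightarrow> 'a :: comm_ring_1 list \<Rightarrow> 'a mat \<Rightarrow> 'a mat" where
  "mat_horner q [] B = 0\<^sub>m q q"
| "mat_horner q (c # cs) B = c \<cdot>\<^sub>m 1\<^sub>m q + B * mat_horner q cs B"

lemma mat_horner_carrier [simp]: "B \<in> carrier_mat q q \<Longrightarrow> mat_horner q cs B \<in> carrier_mat q q"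
  by (induction cs) auto

lemma mat_horner_comm:
  assumes B: "B \<in> carrier_mat q q"
  shows "B * mat_horner q cs B = mat_horner q cs B * B"
proof (induction cs)
  case Nil
  then show ?case using B by simp
next
  case (Cons c cs)
  have "B * mat_horner q (c # cs) B = c \<cdot>\<^sub>m B + B * (B * mat_horner q cs B)"
    using B by (simp add: mult_add_distrib_mat [of _ q q _ q] mult_smult_distrib [of _ q q _ q]
        assoc_mult_mat [of _ q q _ q _ q])
  also have "\<dots> = c \<cdot>\<^sub>m B + B * (mat_horner q cs B * B)" using Cons by simp
  also have "\<dots> = mat_horner q (c # cs) B * B"
    using B by (simp add: add_mult_distrib_mat [of _ q q] mult_smult_assoc_mat [of _ q q _ q]
        assoc_mult_mat [of _ q q _ q _ q])
  finally show ?case .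
qed

lemma mat_horner_sym:
  assumes B: "B \<in> carrier_mat q q" and sym: "B\<^sup>T = B"
  shows "(mat_horner q cs B)\<^sup>T = mat_horner q cs B"
proof (induction cs)
  case Nil
  then show ?case by simp
next
  case (Cons c cs)
  have "(mat_horner q (c # cs) B)\<^sup>T = c \<cdot>\<^sub>m 1\<^sub>m q + (mat_horner q cs B)\<^sup>T * B\<^sup>T"
    using B by (simp add: transpose_add [of _ q q] transpose_mult [of B q q _ q] transpose_smult_mat)
  also have "\<dots> = mat_horner q (c # cs) B" using Cons sym mat_horner_comm [OF B, of cs] by simp
  finally show ?case .
qed

lemma mat_pow_mult_horner_index:
  assumes B: "B \<in> carrier_mat q q" and a: "a < q" and b: "b < q"
  shows "(B ^\<^sub>m j * mat_horner q cs B) $$ (a, b) = (\<Sum>i<length cs. cs ! i * (B ^\<^sub>m (j + i)) $$ (a, b))"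
proof (induction cs arbitrary: j)
  case Nil
  then show ?case using B a b by simp
next
  case (Cons c cs)
  have split: "B ^\<^sub>m j * mat_horner q (c # cs) B = c \<cdot>\<^sub>m B ^\<^sub>m j + B ^\<^sub>m Suc j * mat_horner q cs B"
    using B by (simp add: mult_add_distrib_mat [of _ q q _ q] mult_smult_distrib [of _ q q _ q]
        assoc_mult_mat [of _ q q _ q _ q])
  have "(B ^\<^sub>m j * mat_horner q (c # cs) B) $$ (a, b)
      = c * (B ^\<^sub>m j) $$ (a, b) + (B ^\<^sub>m Suc j * mat_horner q cs B) $$ (a, b)"
    unfolding split using B a b carrier_matD [OF mat_horner_carrier [OF B, of cs]]
    by (simp add: index_add_mat)
  also have "\<dots> = c * (B ^\<^sub>m j) $$ (a, b) + (\<Sum>i<length cs. cs ! i * (B ^\<^sub>m (Suc j + i)) $$ (a, b))"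
    using Cons [of "Suc j"] by (simp del: pow_mat.simps)
  also have "\<dots> = (\<Sum>i<length (c # cs). (c # cs) ! i * (B ^\<^sub>m (j + i)) $$ (a, b))"
    by (simp add: sum.lessThan_Suc_shift del: sum.lessThan_Suc)
  finally show ?case .
qed

lemma zero_row_imp_nontrivial_kernel:
  fixes A :: "'a :: idom mat"
  assumes A: "A \<in> carrier_mat n n" and i: "i < n" and zero_row: "\<forall>j < n. A $$ (i, j) = 0"
  shows "\<exists>v. v \<in> carrier_vec n \<and> v \<noteq> 0\<^sub>v n \<and> A *\<^sub>v v = 0\<^sub>v n"
proof -
  have "A\<^sup>T *\<^sub>v unit_vec n i = 0\<^sub>v n"
    using A i zero_row by (intro eq_vecI) (auto simp: scalar_prod_def unit_vec_def intro!: sum.neutral)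
  moreover have "unit_vec n i \<noteq> 0\<^sub>v n"
    using i by (metis index_unit_vec(1) index_zero_vec(1) zero_neq_one)
  ultimately have "det A\<^sup>T = 0"
    using A by (subst det_0_iff_vec_prod_zero [of _ n]) (auto intro!: exI [of _ "unit_vec n i"])
  then show ?thesis using det_0_iff_vec_prod_zero [OF A] det_transpose [OF A] by simp
qed

text \<open>The \<open>q\<^sup>2 + 1\<close> powers \<open>B\<^sup>0, \<dots>, B\<^bsup>q\<^sup>2\<^esup>\<close> are linearly dependent (the matrix \<open>M\<close> has
  them as columns, padded by a zero row); factoring out the lowest power with a nonzero coefficient
  gives the annihilating polynomial.\<close>
lemma mat_pow_annihilating_horner_exists:
  fixes B :: "'a :: field mat"
  assumes B: "B \<in> carrier_mat q q"
  shows "\<exists>j c cs. c \<noteq> 0 \<and> B ^\<^sub>m j * mat_horner q (c # cs) B = 0\<^sub>m q q"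
proof -
  define N where "N = q * q"
  define M where "M = mat (Suc N) (Suc N) (\<lambda>(r, i). if r < N then (B ^\<^sub>m i) $$ (r div q, r mod q) else 0)"
  obtain v where v: "v \<in> carrier_vec (Suc N)" "v \<noteq> 0\<^sub>v (Suc N)" "M *\<^sub>v v = 0\<^sub>v (Suc N)"
    using zero_row_imp_nontrivial_kernel [of M "Suc N" N] by (auto simp: M_def)
  have "\<exists>i. i < Suc N \<and> v $ i \<noteq> 0"
    using v(1,2) by (metis carrier_vecD eq_vecI index_zero_vec)
  then obtain j where j: "j < Suc N" "v $ j \<noteq> 0" and below: "\<forall>i < j. v $ i = 0"
    by (subst (asm) exists_least_iff) (metis order.strict_trans)
  define L where "L = map (\<lambda>i. v $ (j + i)) [0..<Suc N - j]"
  have L: "L = v $ j # tl L"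
    using j(1) by (simp add: L_def upt_conv_Cons)
  have split: "(\<Sum>i<j + d. f i) = (\<Sum>i<j. f i) + (\<Sum>i<d. f (j + i))" for f :: "nat \<Rightarrow> 'a" and d
    by (induction d) (simp_all add: add.assoc)
  have "B ^\<^sub>m j * mat_horner q L B = 0\<^sub>m q q"
  proof (rule eq_matI)
    fix a b assume "a < dim_row (0\<^sub>m q q)" and "b < dim_col (0\<^sub>m q q)"
    then have a: "a < q" and b: "b < q" by auto
    have r: "a * q + b < N"
    proof -
      have "a * q + b < Suc a * q" using b by simp
      also have "\<dots> \<le> q * q" using a by (intro mult_le_mono1) simp
      finally show ?thesis unfolding N_def .
    qed
    have "(B ^\<^sub>m j * mat_horner q L B) $$ (a, b) = (\<Sum>i<Suc N - j. v $ (j + i) * (B ^\<^sub>m (j + i)) $$ (a, b))"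
      unfolding mat_pow_mult_horner_index [OF B a b] L_def by (auto intro: sum.cong)
    also have "\<dots> = (\<Sum>i<Suc N. v $ i * (B ^\<^sub>m i) $$ (a, b))"
      using split [of "\<lambda>i. v $ i * (B ^\<^sub>m i) $$ (a, b)" "Suc N - j"] below j(1) by simp
    also have "\<dots> = (M *\<^sub>v v) $ (a * q + b)"
      using r v(1) b by (simp add: M_def scalar_prod_def lessThan_atLeast0 mult.commute)
    also have "\<dots> = 0" using v(3) r by simp
    finally show "(B ^\<^sub>m j * mat_horner q L B) $$ (a, b) = 0\<^sub>m q q $$ (a, b)" using a b by simp
  qed (use B carrier_matD [OF mat_horner_carrier [OF B, of L]] in auto)
  then show ?thesis using L j(2) by metis
qed

lemma sym_mat_annihilating_horner_exists:
  fixes B :: "real mat"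
  assumes B: "B \<in> carrier_mat q q" and sym: "B\<^sup>T = B"
  shows "\<exists>c cs. c \<noteq> 0 \<and> B * mat_horner q (c # cs) B = 0\<^sub>m q q"
proof -
  obtain j c cs where c: "c \<noteq> 0" and ann: "B ^\<^sub>m j * mat_horner q (c # cs) B = 0\<^sub>m q q"
    using mat_pow_annihilating_horner_exists [OF B] by blast
  have "B * mat_horner q (c # cs) B = 0\<^sub>m q q"
  proof (cases j)
    case 0
    then show ?thesis using ann B by simp
  next
    case (Suc i)
    show ?thesis
      using ann unfolding Suc by (rule sym_mat_pow_mult_eq_0 [OF B sym mat_horner_carrier [OF B]])
  qed
  then show ?thesis using c by blast
qed

definition penrose_inverse :: "real mat \<Rightarrow> real mat \<Rightarrow> bool" where
  "penrose_inverse A B \<longleftrightarrow> B \<in> carrier_mat (dim_col A) (dim_row A) \<and>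
     A * B * A = A \<and> B * A * B = B \<and> (A * B)\<^sup>T = A * B \<and> (B * A)\<^sup>T = B * A"

text \<open>If \<open>c B + B\<^sup>2 H = 0\<close> with \<open>c \<noteq> 0\<close>, then \<open>F = -H/c\<close> is a symmetric matrix commuting with \<open>B\<close>
  with \<open>B F B = B\<close>, and \<open>F B F\<close> satisfies the Penrose conditions.\<close>
lemma sym_mat_penrose_inverse_exists:
  fixes B :: "real mat"
  assumes B: "B \<in> carrier_mat q q" and sym: "B\<^sup>T = B"
  shows "\<exists>C. penrose_inverse B C"
proof -
  obtain c cs where c: "c \<noteq> 0" and ann: "B * mat_horner q (c # cs) B = 0\<^sub>m q q"
    using sym_mat_annihilating_horner_exists [OF B sym] by blast
  define H where "H = mat_horner q cs B"
  define F where "F = (-1 / c) \<cdot>\<^sub>m H"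
  have H: "H \<in> carrier_mat q q" and F: "F \<in> carrier_mat q q"
    unfolding F_def H_def using B by auto
  have BBF: "B * (B * F) = B"
  proof (rule eq_matI)
    fix a b assume ab: "a < dim_row B" "b < dim_col B"
    have "c * B $$ (a, b) + (B * (B * H)) $$ (a, b) = 0"
      using arg_cong [OF ann, of "\<lambda>M. M $$ (a, b)"] ab B H
      by (simp add: H_def [symmetric] mult_add_distrib_mat [of _ q q _ q] mult_smult_distrib [of _ q q _ q])
    moreover have "(B * (B * F)) $$ (a, b) = (-1 / c) * (B * (B * H)) $$ (a, b)"
      using ab B H unfolding F_def by (simp add: mult_smult_distrib [of _ q q _ q])
    ultimately have "c * (B * (B * F)) $$ (a, b) = c * B $$ (a, b)"
      using c by (simp add: field_simps)
    then show "(B * (B * F)) $$ (a, b) = B $$ (a, b)" using c by simp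
  qed (use B F in auto)
  have FB: "F * B = B * F"
    unfolding F_def H_def using mat_horner_comm [OF B, of cs] B
    by (simp add: mult_smult_distrib [of _ q q _ q] mult_smult_assoc_mat [of _ q q _ q])
  have F_sym: "F\<^sup>T = F"
    unfolding F_def H_def using mat_horner_sym [OF B sym] by (simp add: transpose_smult_mat)
  note assoc = assoc_mult_mat [of _ q q _ q _ q]
  have FB_swap: "F * (B * X) = B * (F * X)" if X: "X \<in> carrier_mat q q" for X
    by (metis assoc_mult_mat [OF F B X] assoc_mult_mat [OF B F X] FB)
  have BBF_cancel: "B * (B * (F * X)) = B * X" if X: "X \<in> carrier_mat q q" for X
    by (metis assoc_mult_mat [OF B F X] assoc_mult_mat [OF B mult_carrier_mat [OF B F] X] BBF)
  have BFB: "B * (F * B) = B" using FB BBF by simp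
  define C where "C = B * (F * F)"
  have C: "C \<in> carrier_mat q q" unfolding C_def using B F by simp
  have "B * C * B = B" and "C * B * C = C" and "(B * C)\<^sup>T = B * C" and "(C * B)\<^sup>T = C * B"
    unfolding C_def using B F
    by (simp_all add: assoc FB_swap BBF_cancel BBF BFB FB transpose_mult [of _ q q _ q] sym F_sym)
  then show ?thesis using B C unfolding penrose_inverse_def by auto
qed

lemma penrose_inverse_unique:
  fixes A B C :: "real mat"
  assumes A: "A \<in> carrier_mat q q" and B: "penrose_inverse A B" and C: "penrose_inverse A C"
  shows "B = C"
proof -
  have Bq: "B \<in> carrier_mat q q" and Cq: "C \<in> carrier_mat q q"
    using A B C unfolding penrose_inverse_def by auto
  have pB: "A * B * A = A" "B * A * B = B" "(A * B)\<^sup>T = A * B" "(B * A)\<^sup>T = B * A"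
    using B unfolding penrose_inverse_def by auto
  have pC: "A * C * A = A" "C * A * C = C" "(A * C)\<^sup>T = A * C" "(C * A)\<^sup>T = C * A"
    using C unfolding penrose_inverse_def by auto
  note assoc = assoc_mult_mat [of _ q q _ q _ q]
  note tm = transpose_mult [of _ q q _ q]
  have AB: "A * B = A * C"
  proof -
    have "A * B = (A * C * A) * B" using pC(1) by simp
    also have "\<dots> = (A * C)\<^sup>T * (A * B)\<^sup>T" using A Bq Cq pB(3) pC(3) by (simp add: assoc)
    also have "\<dots> = (A * B * (A * C))\<^sup>T" using A Bq Cq by (simp add: tm)
    also have "A * B * (A * C) = A * B * A * C" using A Bq Cq by (simp add: assoc)
    finally show ?thesis using pB(1) pC(3) by simp
  qed
  have BA: "B * A = C * A"
  proof -
    have "B * A = B * (A * C * A)" using pC(1) by simp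
    also have "\<dots> = (B * A)\<^sup>T * (C * A)\<^sup>T" using A Bq Cq pB(4) pC(4) by (simp add: assoc)
    also have "\<dots> = (C * A * (B * A))\<^sup>T" using A Bq Cq by (simp add: tm)
    also have "C * A * (B * A) = C * (A * B * A)" using A Bq Cq by (simp add: assoc)
    finally show ?thesis using pB(1) pC(4) by simp
  qed
  have "B = B * (A * C)" by (metis pB(2) AB assoc_mult_mat [OF Bq A Bq])
  also have "\<dots> = C" by (metis pC(2) BA assoc_mult_mat [OF Bq A Cq])
  finally show ?thesis .
qed

lemma mp_inverse_eqI:
  assumes A: "A \<in> carrier_mat q q" and B: "penrose_inverse A B"
  shows "mp_inverse A = B"
proof -
  have "(THE C. penrose_inverse A C) = B"
    by (rule the_equality [where P = "penrose_inverse A", OF B penrose_inverse_unique [OF A _ B]])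
  then show ?thesis unfolding mp_inverse_def penrose_inverse_def .
qed

lemma sym_mat_penrose_inverse_mp_inverse:
  assumes B: "B \<in> carrier_mat q q" and sym: "B\<^sup>T = B"
  shows "penrose_inverse B (mp_inverse B)"
  using sym_mat_penrose_inverse_exists [OF B sym] mp_inverse_eqI [OF B] by metis

lemma gram_mp_inverse_range:
  fixes A :: "real mat"
  assumes A: "A \<in> carrier_mat N q"
  shows "A\<^sup>T * A * mp_inverse (A\<^sup>T * A) * A\<^sup>T = A\<^sup>T"
proof -
  define G where "G = A\<^sup>T * A"
  have At: "A\<^sup>T \<in> carrier_mat q N" using A by simp
  have G: "G \<in> carrier_mat q q" unfolding G_def using A by simp
  have "G\<^sup>T = G" unfolding G_def using A by (simp add: transpose_mult [OF At A])
  then have pen: "penrose_inverse G (mp_inverse G)" by (rule sym_mat_penrose_inverse_mp_inverse [OF G])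
  define E where "E = G * mp_inverse G"
  have E: "E \<in> carrier_mat q q" using pen G unfolding E_def penrose_inverse_def by auto
  have EG: "E * G = G" and E_sym: "E\<^sup>T = E" using pen unfolding E_def penrose_inverse_def by auto
  define Z where "Z = (1\<^sub>m q - E) * A\<^sup>T"
  have IE: "1\<^sub>m q - E \<in> carrier_mat q q" using E by (rule minus_carrier_mat)
  have IE_sym: "(1\<^sub>m q - E)\<^sup>T = 1\<^sub>m q - E" using transpose_minus [of "1\<^sub>m q" q q E] E E_sym by simp
  have IE_G: "(1\<^sub>m q - E) * G = 0\<^sub>m q q"
    using minus_mult_distrib_mat [of "1\<^sub>m q" q q E G q] E G EG by simp
  have Z: "Z \<in> carrier_mat q N" unfolding Z_def using IE At by simp
  have "Z * Z\<^sup>T = (1\<^sub>m q - E) * A\<^sup>T * (A * (1\<^sub>m q - E))"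
    unfolding Z_def using transpose_mult [OF IE At] IE_sym by simp
  also have "\<dots> = (1\<^sub>m q - E) * G * (1\<^sub>m q - E)"
    unfolding G_def using IE At A by (simp add: assoc_mult_mat [of _ q q _ N _ q] assoc_mult_mat [of _ q N _ q _ q]
        assoc_mult_mat [of _ q q _ q _ q] assoc_mult_mat [of _ N q _ q _ q])
  also have "\<dots> = 0\<^sub>m q q" using IE_G left_mult_zero_mat [OF IE] by simp
  finally have "Z = 0\<^sub>m q N" by (rule mult_transpose_eq_0_imp_eq_0 [OF Z])
  then have Z0: "A\<^sup>T - E * A\<^sup>T = 0\<^sub>m q N"
    unfolding Z_def using minus_mult_distrib_mat [of "1\<^sub>m q" q q E "A\<^sup>T" N] E At by simp
  have "E * A\<^sup>T = A\<^sup>T"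
  proof (rule eq_matI)
    fix i j assume ij: "i < dim_row A\<^sup>T" "j < dim_col A\<^sup>T"
    have "(A\<^sup>T - E * A\<^sup>T) $$ (i, j) = 0" using Z0 ij At by simp
    then show "(E * A\<^sup>T) $$ (i, j) = A\<^sup>T $$ (i, j)" using ij E At by simp
  qed (use E At in auto)
  then show ?thesis unfolding E_def G_def using assoc_mult_mat [OF _ _ At, of "A\<^sup>T * A" q] A
    by (simp add: mult_carrier_mat)
qed

lemma weighted_gram_sym:
  fixes x :: "'a :: comm_semiring_0 mat"
  assumes x: "x \<in> carrier_mat N q"
  shows "(x\<^sup>T * mat_diag N d * x)\<^sup>T = x\<^sup>T * mat_diag N d * x"
proof -
  have Dx: "mat_diag N d * x \<in> carrier_mat N q" using mult_carrier_mat [OF mat_diag_dim x] .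
  show ?thesis
    using x Dx by (simp add: transpose_mult [of "x\<^sup>T" q N "mat_diag N d * x" q] transpose_mult [OF mat_diag_dim x]
        assoc_mult_mat [of _ q N _ N _ q])
qed

lemma weighted_design_diag:
  fixes x :: "'a :: comm_semiring_1 mat"
  assumes x: "x \<in> carrier_mat N q"
  shows "x\<^sup>T * mat_diag N w * mat_diag N r = x\<^sup>T * mat_diag N (\<lambda>i. w i * r i)"
  using x by (simp add: assoc_mult_mat [of _ q N _ N _ N])

lemma mp_inverse_weighted_gram_carrier:
  assumes x: "x \<in> carrier_mat N q"
  shows "mp_inverse (x\<^sup>T * mat_diag N d * x) \<in> carrier_mat q q"
proof -
  have G: "x\<^sup>T * mat_diag N d * x \<in> carrier_mat q q" using x by (auto intro!: mult_carrier_mat)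
  show ?thesis
    using sym_mat_penrose_inverse_mp_inverse [OF G weighted_gram_sym [OF x]] carrier_matD [OF x]
    unfolding penrose_inverse_def by simp
qed

lemma weighted_gram_mp_inverse_range:
  fixes x :: "real mat"
  assumes x: "x \<in> carrier_mat N q" and d: "\<forall>i < N. 0 \<le> d i"
  shows "x\<^sup>T * mat_diag N d * x * mp_inverse (x\<^sup>T * mat_diag N d * x) * (x\<^sup>T * mat_diag N d)
    = x\<^sup>T * mat_diag N d"
proof -
  define S where "S = mat_diag N (\<lambda>i. sqrt (d i))"
  define A where "A = S * x"
  have S: "S \<in> carrier_mat N N" unfolding S_def by simp
  have A: "A \<in> carrier_mat N q" unfolding A_def using S x by (rule mult_carrier_mat)
  have SS: "S * S = mat_diag N d"
    unfolding S_def mat_diag_diag by (rule eq_matI) (use d in \<open>auto simp: mat_diag_def\<close>)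
  have At: "A\<^sup>T = x\<^sup>T * S" unfolding A_def using transpose_mult [OF S x] by (simp add: S_def)
  have V: "x\<^sup>T * mat_diag N d = A\<^sup>T * S"
    unfolding At SS [symmetric] using x S by (simp add: assoc_mult_mat [of _ q N _ N _ N])
  have G: "x\<^sup>T * mat_diag N d * x = A\<^sup>T * A"
    unfolding V A_def using x S by (simp add: assoc_mult_mat [of _ q N _ N _ q] At)
  have Gp: "mp_inverse (A\<^sup>T * A) \<in> carrier_mat q q"
    using mp_inverse_weighted_gram_carrier [OF x, of d] unfolding G .
  have "A\<^sup>T * A * mp_inverse (A\<^sup>T * A) * (A\<^sup>T * S) = A\<^sup>T * A * mp_inverse (A\<^sup>T * A) * A\<^sup>T * S"
    using A S Gp by (simp add: assoc_mult_mat [of _ q q _ N _ N])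
  then show ?thesis unfolding G unfolding V gram_mp_inverse_range [OF A] .
qed

definition hat_mat :: "real mat \<Rightarrow> real mat \<Rightarrow> real mat \<Rightarrow> real mat" where
  "hat_mat x m R = x * (mp_inverse (x\<^sup>T * m * R * x) * (x\<^sup>T * m * R))"

lemma hat_mat_carrier:
  assumes "x \<in> carrier_mat N q" and "m \<in> carrier_mat N N" and "R \<in> carrier_mat N N"
    and "mp_inverse (x\<^sup>T * m * R * x) \<in> carrier_mat q q"
  shows "hat_mat x m R \<in> carrier_mat N N"
  using assms unfolding hat_mat_def by (auto intro!: mult_carrier_mat)

lemma minus_minus_mult_eq_if_diff_fixed:
  fixes a b c Q :: "real mat"
  assumes a: "a \<in> carrier_mat k N" and b: "b \<in> carrier_mat k N" and c: "c \<in> carrier_mat k N"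
    and Q: "Q \<in> carrier_mat N N" and fixed: "(a - b) * Q = a - b"
  shows "a - (a - c) * Q = b - (b - c) * Q"
proof -
  have aQ: "a * Q \<in> carrier_mat k N" and bQ: "b * Q \<in> carrier_mat k N" and cQ: "c * Q \<in> carrier_mat k N"
    using a b c Q by auto
  have diff: "a * Q - b * Q = a - b" using fixed minus_mult_distrib_mat [OF a b Q] by simp
  have "a - (a * Q - c * Q) = b - (b * Q - c * Q)"
  proof (rule eq_matI)
    fix i j assume "i < dim_row (b - (b * Q - c * Q))" and "j < dim_col (b - (b * Q - c * Q))"
    then have ij: "i < k" "j < N" using c Q by auto
    have "(a * Q - b * Q) $$ (i, j) = (a - b) $$ (i, j)" by (simp only: diff)
    then have "(a * Q) $$ (i, j) - (b * Q) $$ (i, j) = a $$ (i, j) - b $$ (i, j)"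
      using ij carrier_matD [OF b] carrier_matD [OF bQ] by (simp del: index_mult_mat)
    then show "(a - (a * Q - c * Q)) $$ (i, j) = (b - (b * Q - c * Q)) $$ (i, j)"
      using ij carrier_matD [OF b] carrier_matD [OF bQ] carrier_matD [OF cQ] by (simp del: index_mult_mat)
  qed (use a b cQ in auto)
  then show ?thesis using minus_mult_distrib_mat [OF a c Q] minus_mult_distrib_mat [OF b c Q] by simp
qed

lemma mu_MI_eq_hat_mat:
  assumes ones: "ones \<in> carrier_mat N k" and x: "x \<in> carrier_mat N q"
    and m: "m \<in> carrier_mat N N" and R: "R \<in> carrier_mat N N"
    and Gp: "mp_inverse (x\<^sup>T * m * R * x) \<in> carrier_mat q q"
  shows "mu_MI n N ones x m R y =
    (1 / real n) \<cdot>\<^sub>v ((ones\<^sup>T * R - (ones\<^sup>T * R - ones\<^sup>T) * hat_mat x m R) *\<^sub>v y)"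
proof -
  define Gp where "Gp = mp_inverse (x\<^sup>T * m * R * x)"
  define I :: "real mat" where "I = 1\<^sub>m N"
  define Y where "Y = (R - I) * x * Gp * x\<^sup>T * m"
  define H where "H = hat_mat x m R"
  have Gq: "Gp \<in> carrier_mat q q" using Gp unfolding Gp_def .
  have RI: "R - I \<in> carrier_mat N N" unfolding I_def by (rule minus_carrier_mat) simp
  have O: "ones\<^sup>T \<in> carrier_mat k N" using ones by simp
  have H: "H \<in> carrier_mat N N" unfolding H_def using hat_mat_carrier [OF x m R Gp] .
  have Y: "Y \<in> carrier_mat N N" unfolding Y_def using RI x Gq m by (auto intro!: mult_carrier_mat)
  have YR: "Y * R = (R - I) * H"
    unfolding Y_def H_def hat_mat_def Gp_def [symmetric]
    using RI x Gq m R mult_carrier_mat [OF x Gq] mult_carrier_mat [OF m R]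
      mult_carrier_mat [OF transpose_carrier_mat [THEN iffD2, OF x] mult_carrier_mat [OF m R]]
    by (simp add: assoc_mult_mat [of _ N N _ N _ N] assoc_mult_mat [of _ N N _ q _ N] assoc_mult_mat [of _ N q _ N _ N]
        assoc_mult_mat [of _ q q _ N _ N] assoc_mult_mat [of _ N q _ q _ N] assoc_mult_mat [of _ q N _ N _ N]
        mult_carrier_mat)
  have "ones\<^sup>T * (I - Y) * R = ones\<^sup>T * R - ones\<^sup>T * (Y * R)"
    using O Y R by (simp add: I_def mult_minus_distrib_mat [OF O _ Y] minus_mult_distrib_mat [of _ k N]
        assoc_mult_mat [of _ k N _ N _ N])
  also have "ones\<^sup>T * (Y * R) = (ones\<^sup>T * R - ones\<^sup>T) * H"
    using O R H by (simp add: YR I_def minus_mult_distrib_mat [OF R one_carrier_mat H]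
        mult_minus_distrib_mat [OF O mult_carrier_mat [OF R H] H] mult_minus_distrib_mat [OF O R]
        minus_mult_distrib_mat [of _ k N] assoc_mult_mat [of _ k N _ N _ N])
  finally show ?thesis unfolding mu_MI_def Y_def I_def Gp_def H_def by simp
qed

lemma smult_minus_distrib_mat:
  fixes A B :: "'a :: ring mat"
  shows "A \<in> carrier_mat nr nc \<Longrightarrow> B \<in> carrier_mat nr nc \<Longrightarrow> c \<cdot>\<^sub>m (A - B) = c \<cdot>\<^sub>m A - c \<cdot>\<^sub>m B"
  by (rule eq_matI) (auto simp: algebra_simps)

lemma smult_minus_distrib_vec:
  fixes u w :: "'a :: ring vec"
  shows "u \<in> carrier_vec n \<Longrightarrow> w \<in> carrier_vec n \<Longrightarrow> c \<cdot>\<^sub>v (u - w) = c \<cdot>\<^sub>v u - c \<cdot>\<^sub>v w"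
  by (rule eq_vecI) (auto simp: algebra_simps)

lemma smult_mat_mult_vec:
  fixes A :: "'a :: comm_ring mat"
  shows "v \<in> carrier_vec (dim_col A) \<Longrightarrow> (c \<cdot>\<^sub>m A) *\<^sub>v v = c \<cdot>\<^sub>v (A *\<^sub>v v)"
  by (rule eq_vecI) auto

lemma mu_GR_eq_hat_mat:
  assumes ones: "ones \<in> carrier_mat N k" and x: "x \<in> carrier_mat N q"
    and m: "m \<in> carrier_mat N N" and R: "R \<in> carrier_mat N N" and P: "P \<in> carrier_mat N N"
    and y: "y \<in> carrier_vec N" and Gp: "mp_inverse (x\<^sup>T * m * R * x) \<in> carrier_mat q q"
  shows "mu_GR n ones x m R P y =
    (1 / real n) \<cdot>\<^sub>v ((ones\<^sup>T * P * R - (ones\<^sup>T * P * R - ones\<^sup>T) * hat_mat x m R) *\<^sub>v y)"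
proof -
  define c where "c = 1 / real n"
  define Gp where "Gp = mp_inverse (x\<^sup>T * m * R * x)"
  define V where "V = x\<^sup>T * m * R"
  define b where "b = ones\<^sup>T * P * R"
  have Gq: "Gp \<in> carrier_mat q q" using Gp unfolding Gp_def .
  have O: "ones\<^sup>T \<in> carrier_mat k N" using ones by simp
  have b: "b \<in> carrier_mat k N" unfolding b_def using O P R by (auto intro!: mult_carrier_mat)
  have bO: "b - ones\<^sup>T \<in> carrier_mat k N" using O by (rule minus_carrier_mat)
  have V: "V \<in> carrier_mat q N" unfolding V_def using x m R by (auto intro!: mult_carrier_mat)
  have GV: "Gp * V \<in> carrier_mat q N" using Gq V by (rule mult_carrier_mat)
  have H: "hat_mat x m R = x * (Gp * V)" unfolding hat_mat_def Gp_def V_def ..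
  have Hc: "x * (Gp * V) \<in> carrier_mat N N" using x GV by (rule mult_carrier_mat)
  have b_hat: "b_hat x m R y = (Gp * V) *\<^sub>v y"
    unfolding b_hat_def Gp_def [symmetric] V_def using Gq x m R
    by (simp add: assoc_mult_mat [of _ q q _ N _ N] assoc_mult_mat [of _ q N _ N _ N] mult_carrier_mat)
  have "(c \<cdot>\<^sub>m b - c \<cdot>\<^sub>m ones\<^sup>T) * x = c \<cdot>\<^sub>m ((b - ones\<^sup>T) * x)"
    using b O x bO by (simp add: smult_minus_distrib_mat [symmetric] mult_smult_assoc_mat [OF bO x])
  moreover have "((b - ones\<^sup>T) * x) *\<^sub>v ((Gp * V) *\<^sub>v y) = ((b - ones\<^sup>T) * hat_mat x m R) *\<^sub>v y"
    unfolding H using bO x GV y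
    by (simp add: assoc_mult_mat_vec [symmetric, of _ k q _ N] assoc_mult_mat [OF bO x GV])
  ultimately have "((c \<cdot>\<^sub>m b - c \<cdot>\<^sub>m ones\<^sup>T) * x) *\<^sub>v b_hat x m R y
      = c \<cdot>\<^sub>v (((b - ones\<^sup>T) * hat_mat x m R) *\<^sub>v y)"
    unfolding b_hat using bO x GV y by (simp add: smult_mat_mult_vec)
  moreover have "c \<cdot>\<^sub>v (b *\<^sub>v y) - c \<cdot>\<^sub>v (((b - ones\<^sup>T) * hat_mat x m R) *\<^sub>v y)
      = c \<cdot>\<^sub>v ((b - (b - ones\<^sup>T) * hat_mat x m R) *\<^sub>v y)"
    unfolding H using b bO Hc y
    by (simp add: smult_minus_distrib_vec [symmetric, of _ k] minus_mult_distrib_mat_vec [of _ k N])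
  ultimately show ?thesis unfolding mu_GR_def c_def b_def by simp
qed

lemma mu_MI_eq_mu_GR_if_hat_absorbs:
  assumes ones: "ones \<in> carrier_mat N k" and x: "x \<in> carrier_mat N q"
    and m: "m \<in> carrier_mat N N" and R: "R \<in> carrier_mat N N" and P: "P \<in> carrier_mat N N"
    and y: "y \<in> carrier_vec N" and Gp: "mp_inverse (x\<^sup>T * m * R * x) \<in> carrier_mat q q"
    and absorb: "ones\<^sup>T * (1\<^sub>m N - P) * R * hat_mat x m R = ones\<^sup>T * (1\<^sub>m N - P) * R"
  shows "mu_MI n N ones x m R y = mu_GR n ones x m R P y"
proof -
  have O: "ones\<^sup>T \<in> carrier_mat k N" using ones by simp
  have "ones\<^sup>T * (1\<^sub>m N - P) * R = ones\<^sup>T * R - ones\<^sup>T * P * R"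
    using O P R by (simp add: mult_minus_distrib_mat [OF O one_carrier_mat P] minus_mult_distrib_mat [of _ k N])
  then have "ones\<^sup>T * R - (ones\<^sup>T * R - ones\<^sup>T) * hat_mat x m R
      = ones\<^sup>T * P * R - (ones\<^sup>T * P * R - ones\<^sup>T) * hat_mat x m R"
    using O P R absorb hat_mat_carrier [OF x m R Gp] by (intro minus_minus_mult_eq_if_diff_fixed) auto
  then show ?thesis
    using mu_MI_eq_hat_mat [OF ones x m R Gp] mu_GR_eq_hat_mat [OF ones x m R P y Gp] by simp
qed

lemma calibration_transpose:
  fixes x ones t :: "real mat"
  assumes x: "x \<in> carrier_mat N q" and ones: "ones \<in> carrier_mat N k" and t: "t \<in> carrier_mat q k"
    and cal: "mat_diag N r * mat_diag N w * x * t = mat_diag N r * (1\<^sub>m N - mat_diag N p) * ones"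
  shows "ones\<^sup>T * (1\<^sub>m N - mat_diag N p) * mat_diag N r = t\<^sup>T * (x\<^sup>T * mat_diag N w * mat_diag N r)"
proof -
  define D where "D = mat_diag N (\<lambda>i. w i * r i)"
  have D: "D \<in> carrier_mat N N" unfolding D_def by simp
  have IP: "1\<^sub>m N - mat_diag N p \<in> carrier_mat N N" by (rule minus_carrier_mat) simp
  have "mat_diag N r * mat_diag N w = D" unfolding D_def by (simp add: mult.commute)
  then have "(mat_diag N r * mat_diag N w * x * t)\<^sup>T = t\<^sup>T * (x\<^sup>T * D)"
    using transpose_mult [OF mult_carrier_mat [OF D x] t] transpose_mult [OF D x] by (simp add: D_def)
  moreover have "(mat_diag N r * (1\<^sub>m N - mat_diag N p) * ones)\<^sup>T
      = ones\<^sup>T * (1\<^sub>m N - mat_diag N p) * mat_diag N r"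
  proof -
    have "(1\<^sub>m N - mat_diag N p)\<^sup>T = 1\<^sub>m N - mat_diag N p"
      using transpose_minus [of "1\<^sub>m N" N N "mat_diag N p"] by simp
    then show ?thesis
      using transpose_mult [OF mult_carrier_mat [OF mat_diag_dim IP] ones] transpose_mult [OF mat_diag_dim IP]
        assoc_mult_mat [OF transpose_carrier_mat [THEN iffD2, OF ones] IP mat_diag_dim] by simp
  qed
  moreover have "x\<^sup>T * mat_diag N w * mat_diag N r = x\<^sup>T * D"
    unfolding D_def using x by (simp add: assoc_mult_mat [of _ q N _ N _ N])
  ultimately show ?thesis using cal by simp
qed

lemma calibration_hat_mat_absorbs:
  fixes x ones t :: "real mat"
  assumes x: "x \<in> carrier_mat N q" and ones: "ones \<in> carrier_mat N k" and t: "t \<in> carrier_mat q k"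
    and nonneg: "\<forall>i < N. 0 \<le> w i * r i"
    and cal: "mat_diag N r * mat_diag N w * x * t = mat_diag N r * (1\<^sub>m N - mat_diag N p) * ones"
  defines "U \<equiv> ones\<^sup>T * (1\<^sub>m N - mat_diag N p) * mat_diag N r"
  shows "U * hat_mat x (mat_diag N w) (mat_diag N r) = U"
proof -
  define V where "V = x\<^sup>T * mat_diag N (\<lambda>i. w i * r i)"
  define Gp where "Gp = mp_inverse (V * x)"
  have V: "V \<in> carrier_mat q N" unfolding V_def using x by simp
  have Gp: "Gp \<in> carrier_mat q q"
    unfolding Gp_def V_def by (rule mp_inverse_weighted_gram_carrier [OF x])
  have U: "U = t\<^sup>T * V"
    unfolding U_def V_def calibration_transpose [OF x ones t cal] weighted_design_diag [OF x] ..
  have "U * hat_mat x (mat_diag N w) (mat_diag N r) = t\<^sup>T * V * (x * (Gp * V))"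
    unfolding U hat_mat_def weighted_design_diag [OF x] Gp_def V_def ..
  also have "\<dots> = t\<^sup>T * (V * x * Gp * V)"
    using t V x Gp by (simp add: assoc_mult_mat [of _ k q _ N _ N] assoc_mult_mat [of _ q N _ q _ N]
        assoc_mult_mat [of _ q N _ q _ q] assoc_mult_mat [of _ q q _ q _ N] assoc_mult_mat [of _ N q _ q _ N])
  also have "\<dots> = U"
    unfolding U Gp_def V_def weighted_gram_mp_inverse_range [OF x nonneg] ..
  finally show ?thesis .
qed

theorem mainTheorem9:
  fixes k n :: nat and X :: "real mat" and y :: "real vec"
    and mdiag rdiag pidiag :: "nat \<Rightarrow> real"
  assumes X: "X \<in> carrier_mat n p"
    and y: "y \<in> carrier_vec (k * n)"
    and m_pos: "\<forall>i < k * n. mdiag i > 0"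
    and R_ind: "\<forall>i < k * n. rdiag i = 0 \<or> rdiag i = 1"
    and pi_rng: "\<forall>i < k * n. 0 < pidiag i \<and> pidiag i < 1"
    and t_ex: "\<exists>t \<in> carrier_mat (k + p) k.
      mat_diag (k * n) rdiag * mat_diag (k * n) mdiag * design_mat k n X * t =
      mat_diag (k * n) rdiag * (1\<^sub>m (k * n) - mat_diag (k * n) (\<lambda>i. 1 / pidiag i)) * ones_blk k n"
  shows "mu_MI n (k * n) (ones_blk k n) (design_mat k n X) (mat_diag (k * n) mdiag)
           (mat_diag (k * n) rdiag) y =
         mu_GR n (ones_blk k n) (design_mat k n X) (mat_diag (k * n) mdiag)
           (mat_diag (k * n) rdiag) (mat_diag (k * n) (\<lambda>i. 1 / pidiag i)) y"
proof -
  define N where "N = k * n"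
  define x where "x = design_mat k n X"
  define ones where "ones = ones_blk k n"
  have x: "x \<in> carrier_mat N (k + p)" unfolding x_def design_mat_def N_def using X by auto
  have ones: "ones \<in> carrier_mat N k" unfolding ones_def ones_blk_def N_def by auto
  obtain t where t: "t \<in> carrier_mat (k + p) k" and cal: "mat_diag N rdiag * mat_diag N mdiag * x * t
      = mat_diag N rdiag * (1\<^sub>m N - mat_diag N (\<lambda>i. 1 / pidiag i)) * ones"
    using t_ex unfolding x_def ones_def N_def by blast
  have "\<forall>i < N. 0 \<le> mdiag i * rdiag i"
    using m_pos R_ind unfolding N_def by (metis less_eq_real_def mult_nonneg_nonneg zero_le_one)
  note absorb = calibration_hat_mat_absorbs [OF x ones t this cal]
  have "mp_inverse (x\<^sup>T * mat_diag N mdiag * mat_diag N rdiag * x) \<in> carrier_mat (k + p) (k + p)"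
    using mp_inverse_weighted_gram_carrier [OF x] unfolding weighted_design_diag [OF x] .
  from mu_MI_eq_mu_GR_if_hat_absorbs [OF ones x mat_diag_dim mat_diag_dim mat_diag_dim y [folded N_def] this absorb]
  show ?thesis unfolding N_def x_def ones_def .
qed

end
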